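(* Let $D=(V,E;s,t)$, $N$ be as in the context and let $\widetilde\Gamma_D=(N,\tilde\gamma)$ be the auxiliary game. Then $\mathcal{C}(\widetilde\Gamma_D)=\{x\in\chi(\widetilde\Gamma_D): x(N\cap P)\ge1 \text{ for all } P\in\mathscr{P}\}$, and this set is non-empty.
   Context: $D=(V,E;s,t)$ is a directed network with unit arc capacities (parallel arcs allowed); $N\subseteq E$ is the set of private arcs (players), $M=E\setminus N$ public arcs; every $s$-$t$ path contains an arc of $N$ and every arc lies on some $s$-$t$ path. A path is a set of arcs joining a sequence of distinct vertices along the same direction; $\mathscr{P}$ is the set of all $s$-$t$ paths. For $S\subseteq N$, $\gamma(S)$ is the maximum number of pairwise arc-disjoint $s$-$t$ paths in $D_S=(V,S\cup M;s,t)$. $\sigma_N$ is the maximum number of $s$-$t$ paths pairwise sharing no arc of $N$. The auxiliary game $\widetilde\Gamma_D=(N,\tilde\gamma)$ has $\tilde\gamma(N)=\sigma_N$ and $\tilde\gamma(S)=\gamma(S)$ for $S\subsetneq N$. $x(S)=\sum_{i\in S}x_i$; $\chi(\widetilde\Gamma_D)=\{x\in\mathbb{R}^N_{\ge0}:x(N)=\sigma_N\}$; $\mathcal{C}(\widetilde\Gamma_D)=\{x\in\chi(\widetilde\Gamma_D):x(S)\ge\tilde\gamma(S)\ \forall S\subseteq N\}$. *)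

theory Defs
  imports Complex_Main "HOL-Library.FuncSet"
begin

definition is_st_path ::
  "('e \<Rightarrow> 'v) \<Rightarrow> ('e \<Rightarrow> 'v) \<Rightarrow> 'e set \<Rightarrow> 'v \<Rightarrow> 'v \<Rightarrow> 'e set \<Rightarrow> bool" where
  "is_st_path tail head A s t P \<longleftrightarrow>
     (\<exists>es vs. set es = P \<and> set es \<subseteq> A \<and> length vs = Suc (length es) \<and>
        vs ! 0 = s \<and> vs ! length es = t \<and> distinct vs \<and>
        (\<forall>i<length es. tail (es ! i) = vs ! i \<and> head (es ! i) = vs ! Suc i))"

definition st_paths ::
  "('e \<Rightarrow> 'v) \<Rightarrow> ('e \<Rightarrow> 'v) \<Rightarrow> 'e set \<Rightarrow> 'v \<Rightarrow> 'v \<Rightarrow> 'e set set" where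
  "st_paths tail head A s t = {P. is_st_path tail head A s t P}"

definition gamma ::
  "('e \<Rightarrow> 'v) \<Rightarrow> ('e \<Rightarrow> 'v) \<Rightarrow> 'e set \<Rightarrow> 'e set \<Rightarrow> 'v \<Rightarrow> 'v \<Rightarrow> 'e set \<Rightarrow> nat" where
  "gamma tail head E N s t S = Max {k. \<exists>ps. length ps = k \<and>
       (\<forall>P\<in>set ps. P \<in> st_paths tail head (S \<union> (E - N)) s t) \<and>
       (\<forall>i<k. \<forall>j<k. i \<noteq> j \<longrightarrow> ps ! i \<inter> ps ! j = {})}"

definition sigmaN ::
  "('e \<Rightarrow> 'v) \<Rightarrow> ('e \<Rightarrow> 'v) \<Rightarrow> 'e set \<Rightarrow> 'e set \<Rightarrow> 'v \<Rightarrow> 'v \<Rightarrow> nat" where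
  "sigmaN tail head E N s t = Max {k. \<exists>ps. length ps = k \<and>
       (\<forall>P\<in>set ps. P \<in> st_paths tail head E s t) \<and>
       (\<forall>i<k. \<forall>j<k. i \<noteq> j \<longrightarrow> ps ! i \<inter> ps ! j \<inter> N = {})}"

definition gamma_tilde ::
  "('e \<Rightarrow> 'v) \<Rightarrow> ('e \<Rightarrow> 'v) \<Rightarrow> 'e set \<Rightarrow> 'e set \<Rightarrow> 'v \<Rightarrow> 'v \<Rightarrow> 'e set \<Rightarrow> nat" where
  "gamma_tilde tail head E N s t S =
     (if S = N then sigmaN tail head E N s t else gamma tail head E N s t S)"

definition chi ::
  "('e \<Rightarrow> 'v) \<Rightarrow> ('e \<Rightarrow> 'v) \<Rightarrow> 'e set \<Rightarrow> 'e set \<Rightarrow> 'v \<Rightarrow> 'v \<Rightarrow> ('e \<Rightarrow> real) set" where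
  "chi tail head E N s t = {x. x \<in> extensional N \<and> (\<forall>i\<in>N. x i \<ge> 0) \<and>
       sum x N = real (sigmaN tail head E N s t)}"

definition core ::
  "('e \<Rightarrow> 'v) \<Rightarrow> ('e \<Rightarrow> 'v) \<Rightarrow> 'e set \<Rightarrow> 'e set \<Rightarrow> 'v \<Rightarrow> 'v \<Rightarrow> ('e \<Rightarrow> real) set" where
  "core tail head E N s t = {x \<in> chi tail head E N s t.
       \<forall>S. S \<subseteq> N \<longrightarrow> sum x S \<ge> real (gamma_tilde tail head E N s t S)}"

end

theory Submission
  imports Defs
begin

text \<open>
  Every core allocation gives each s-t path P at least one unit on its private arcs, because
  P alone is a path of D restricted to (N \<inter> P) \<union> M (and if N \<inter> P = N, then sigma_N \<ge> 1).
  Conversely the path constraints imply all core constraints: gamma(S) arc-disjoint paths of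
  D restricted to S \<union> M have disjoint private parts inside S, each worth at least one unit,
  and the constraint for N is efficiency.

  For non-emptiness, give the private arcs capacity 1 and the public arcs unbounded capacity.
  A maximum integral flow decomposes into paths pairwise sharing no private arc, and the arcs
  leaving the set of vertices reachable from s in its residual network are saturated private
  arcs meeting every s-t path. By this Menger-type duality their number is sigma_N, so their
  indicator vector lies in the core.
\<close>

fun walk :: "('l \<Rightarrow> 'v) \<Rightarrow> ('l \<Rightarrow> 'v) \<Rightarrow> ('l \<Rightarrow> bool) \<Rightarrow> 'v \<Rightarrow> 'l list \<Rightarrow> 'v \<Rightarrow> bool" where
  "walk src dst ok u [] w \<longleftrightarrow> u = w"
| "walk src dst ok u (l # ls) w \<longleftrightarrow> ok l \<and> src l = u \<and> walk src dst ok (dst l) ls w"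

lemma walk_append:
  "walk src dst ok u (xs @ ys) w \<longleftrightarrow> (\<exists>m. walk src dst ok u xs m \<and> walk src dst ok m ys w)"
  by (induction xs arbitrary: u) auto

lemma walk_mono: "walk src dst ok u ls w \<Longrightarrow> (\<And>l. ok l \<Longrightarrow> ok' l) \<Longrightarrow> walk src dst ok' u ls w"
  by (induction ls arbitrary: u) auto

lemma walk_ok: "walk src dst ok u ls w \<Longrightarrow> l \<in> set ls \<Longrightarrow> ok l"
  by (induction ls arbitrary: u) auto

lemma walk_nth:
  assumes "walk src dst ok u ls w"
  shows "\<forall>i<length ls. src (ls ! i) = (u # map dst ls) ! i \<and> dst (ls ! i) = (u # map dst ls) ! Suc i"
    and "(u # map dst ls) ! length ls = w"
  using assms by (induction ls arbitrary: u) (auto simp: nth_Cons split: nat.split)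

lemma rtrancl_imp_simple_walk:
  assumes "(u, w) \<in> {(src l, dst l) | l. ok l}\<^sup>*"
  shows "\<exists>ls. walk src dst ok u ls w \<and> distinct (u # map dst ls)"
  using assms
proof (induction rule: rtrancl_induct)
  case base
  show ?case by (rule exI[of _ "[]"]) simp
next
  case (step y z)
  obtain ls where ls: "walk src dst ok u ls y" "distinct (u # map dst ls)"
    using step.IH by blast
  obtain l where l: "ok l" "src l = y" "dst l = z"
    using step.hyps(2) by blast
  show ?case
  proof (cases "z \<in> set (u # map dst ls)")
    case True
    show ?thesis
    proof (cases "z = u")
      case False
      then obtain l' xs ys where split: "ls = xs @ l' # ys" "dst l' = z"
        using True by (auto simp: in_set_conv_decomp)
      then have "walk src dst ok u (xs @ [l']) z"
        using ls(1) by (auto simp: walk_append)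
      moreover have "distinct (u # map dst (xs @ [l']))"
        using ls(2) split(1) by auto
      ultimately show ?thesis by blast
    qed (intro exI[of _ "[]"], simp)
  next
    case False
    have "walk src dst ok u (ls @ [l]) z"
      using ls(1) l by (auto simp: walk_append)
    moreover have "distinct (u # map dst (ls @ [l]))"
      using ls(2) False l by auto
    ultimately show ?thesis by blast
  qed
qed

lemma finite_reachable:
  assumes "finite (dst ` Collect ok)"
  shows "finite {v. (u, v) \<in> {(src l, dst l) | l. ok l}\<^sup>*}"
proof -
  have "(u, v) \<in> {(src l, dst l) | l. ok l}\<^sup>* \<Longrightarrow> v = u \<or> v \<in> dst ` Collect ok" for v
    by (induction rule: rtrancl_induct) auto
  then have "{v. (u, v) \<in> {(src l, dst l) | l. ok l}\<^sup>*} \<subseteq> insert u (dst ` Collect ok)"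
    by blast
  then show ?thesis
    using assms finite_subset by blast
qed

lemma is_st_path_refl: "is_st_path tail head A s s {}"
  unfolding is_st_path_def by (intro exI[of _ "[]"] exI[of _ "[s]"]) auto

lemma is_st_path_subset: "is_st_path tail head A s t P \<Longrightarrow> P \<subseteq> A"
  unfolding is_st_path_def by blast

lemma is_st_path_mono: "is_st_path tail head A s t P \<Longrightarrow> P \<subseteq> B \<Longrightarrow> is_st_path tail head B s t P"
  unfolding is_st_path_def by blast

lemma simple_walk_is_st_path:
  assumes "walk tail head (\<lambda>e. e \<in> A) s es t" "distinct (s # map head es)"
  shows "is_st_path tail head A s t (set es)"
  unfolding is_st_path_def
proof (intro exI[of _ es] exI[of _ "s # map head es"] conjI)
  show "set es \<subseteq> A" using walk_ok[OF assms(1)] by auto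
qed (use assms walk_nth[OF assms(1)] in auto)

lemma st_path_leaves:
  assumes "is_st_path tail head A s t P" "s \<in> R" "t \<notin> R"
  shows "\<exists>e\<in>P. tail e \<in> R \<and> head e \<notin> R"
proof -
  obtain es vs where p: "set es = P" "length vs = Suc (length es)" "vs ! 0 = s" "vs ! length es = t"
      "\<forall>i<length es. tail (es ! i) = vs ! i \<and> head (es ! i) = vs ! Suc i"
    using assms(1) unfolding is_st_path_def by blast
  obtain i where "i < length es" "vs ! i \<in> R" "vs ! Suc i \<notin> R"
    using ex_least_nat_less[where P = "\<lambda>i. vs ! i \<notin> R" and n = "length es"] p(3,4) assms(2,3)
    by auto
  then show ?thesis using p(1,5) by (metis nth_mem)
qed

definition packings :: "('e \<Rightarrow> 'v) \<Rightarrow> ('e \<Rightarrow> 'v) \<Rightarrow> 'e set \<Rightarrow> 'v \<Rightarrow> 'v \<Rightarrow> 'e set \<Rightarrow> 'e set list set" where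
  "packings tail head A s t X = {ps. set ps \<subseteq> st_paths tail head A s t \<and>
     (\<forall>i<length ps. \<forall>j<length ps. i \<noteq> j \<longrightarrow> ps ! i \<inter> ps ! j \<inter> X = {})}"

lemma sigmaN_eq_Max_packings:
  "sigmaN tail head E N s t = Max (length ` packings tail head E s t N)"
  unfolding sigmaN_def packings_def by (intro arg_cong[where f = Max] set_eqI) (auto simp: image_iff subset_iff)

lemma gamma_eq_Max_packings:
  "gamma tail head E N s t S = Max (length ` packings tail head (S \<union> (E - N)) s t UNIV)"
  unfolding gamma_def packings_def by (intro arg_cong[where f = Max] set_eqI) (auto simp: image_iff subset_iff)

lemma Nil_in_packings: "[] \<in> packings tail head A s t X"
  unfolding packings_def by simp

lemma Cons_in_packings_iff:
  "P # ps \<in> packings tail head A s t X \<longleftrightarrow>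
     P \<in> st_paths tail head A s t \<and> ps \<in> packings tail head A s t X \<and> (\<forall>Q\<in>set ps. P \<inter> Q \<inter> X = {})"
proof -
  have "(\<forall>i<length (P # ps). \<forall>j<length (P # ps). i \<noteq> j \<longrightarrow> (P # ps) ! i \<inter> (P # ps) ! j \<inter> X = {}) \<longleftrightarrow>
      (\<forall>i<length ps. \<forall>j<length ps. i \<noteq> j \<longrightarrow> ps ! i \<inter> ps ! j \<inter> X = {}) \<and>
      (\<forall>j<length ps. P \<inter> ps ! j \<inter> X = {})"
    unfolding length_Cons All_less_Suc2 by (auto simp: Int_commute) blast
  then show ?thesis
    unfolding packings_def by (auto simp: all_set_conv_all_nth)
qed

lemma st_paths_mono: "A \<subseteq> B \<Longrightarrow> st_paths tail head A s t \<subseteq> st_paths tail head B s t"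
  unfolding st_paths_def by (auto intro: is_st_path_mono dest: is_st_path_subset)

lemma length_packing_le_card:
  assumes "ps \<in> packings tail head A s t X" "finite C" "C \<subseteq> X"
    and "\<forall>P\<in>st_paths tail head A s t. P \<inter> C \<noteq> {}"
  shows "length ps \<le> card C"
proof -
  have hit: "ps ! i \<inter> C \<noteq> {}" if "i < length ps" for i
    using assms(1,4) that nth_mem unfolding packings_def by blast
  define pick where "pick i = (SOME e. e \<in> ps ! i \<inter> C)" for i
  have pick: "pick i \<in> ps ! i \<inter> C" if "i < length ps" for i
    unfolding pick_def using hit[OF that] by (metis ex_in_conv someI)
  have "inj_on pick {..<length ps}"
  proof (rule inj_onI, rule ccontr)
    fix i j assume ij: "i \<in> {..<length ps}" "j \<in> {..<length ps}" "pick i = pick j" "i \<noteq> j"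
    then have "pick i \<in> ps ! i \<inter> ps ! j \<inter> X"
      using pick[of i] pick[of j] ij assms(3) by auto
    moreover have "ps ! i \<inter> ps ! j \<inter> X = {}"
      using assms(1) ij unfolding packings_def by auto
    ultimately show False by blast
  qed
  moreover have "pick ` {..<length ps} \<subseteq> C"
    using pick by auto
  ultimately show ?thesis
    using card_inj_on_le assms(2) by fastforce
qed

lemma finite_packing_lengths:
  assumes "finite C" "C \<subseteq> X" "\<forall>P\<in>st_paths tail head A s t. P \<inter> C \<noteq> {}"
  shows "finite (length ` packings tail head A s t X)"
  unfolding finite_nat_set_iff_bounded_le using length_packing_le_card[OF _ assms] by blast

fun signed_flow :: "('e \<times> bool) list \<Rightarrow> 'e \<Rightarrow> int" where
  "signed_flow [] e = 0"
| "signed_flow ((a, fwd) # ls) e = signed_flow ls e + (if e = a then (if fwd then 1 else -1) else 0)"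

lemma signed_flow_distinct:
  "distinct (map fst ls) \<Longrightarrow>
     signed_flow ls e = (if (e, True) \<in> set ls then 1 else if (e, False) \<in> set ls then -1 else 0)"
  by (induction ls e rule: signed_flow.induct) (auto simp: image_iff)

lemma signed_flow_forward:
  "distinct es \<Longrightarrow> signed_flow (map (\<lambda>e. (e, True)) es) e = of_bool (e \<in> set es)"
  by (induction es) auto

locale st_network =
  fixes E N :: "'e set" and s t :: 'v and tail head :: "'e \<Rightarrow> 'v"
  assumes finite_E: "finite E" and N_subset_E: "N \<subseteq> E" and s_neq_t: "s \<noteq> t"
    and paths_meet_N: "\<forall>P\<in>st_paths tail head E s t. P \<inter> N \<noteq> {}"
begin

definition excess :: "('e \<Rightarrow> int) \<Rightarrow> 'v \<Rightarrow> int" where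
  "excess f v = (\<Sum>e | e \<in> E \<and> head e = v. f e) - (\<Sum>e | e \<in> E \<and> tail e = v. f e)"

definition is_flow :: "('e \<Rightarrow> int) \<Rightarrow> nat \<Rightarrow> bool" where
  "is_flow f k \<longleftrightarrow> (\<forall>e\<in>E. 0 \<le> f e) \<and> (\<forall>e\<in>N. f e \<le> 1) \<and>
     (\<forall>v. v \<noteq> s \<longrightarrow> v \<noteq> t \<longrightarrow> excess f v = 0) \<and> excess f t = int k \<and> excess f s = - int k"

definition out_arcs :: "'v set \<Rightarrow> 'e set" where
  "out_arcs R = {e \<in> E. tail e \<in> R \<and> head e \<notin> R}"

definition in_arcs :: "'v set \<Rightarrow> 'e set" where
  "in_arcs R = {e \<in> E. head e \<in> R \<and> tail e \<notin> R}"

definition res_tail :: "'e \<times> bool \<Rightarrow> 'v" where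
  "res_tail l = (if snd l then tail (fst l) else head (fst l))"

definition res_head :: "'e \<times> bool \<Rightarrow> 'v" where
  "res_head l = (if snd l then head (fst l) else tail (fst l))"

definition residual :: "('e \<Rightarrow> int) \<Rightarrow> 'e \<times> bool \<Rightarrow> bool" where
  "residual f l \<longleftrightarrow> fst l \<in> E \<and> (if snd l then fst l \<in> N \<longrightarrow> f (fst l) < 1 else 0 < f (fst l))"

lemma finite_N: "finite N"
  using finite_E N_subset_E finite_subset by blast

lemma excess_add: "excess (\<lambda>e. f e + g e) v = excess f v + excess g v"
  unfolding excess_def by (simp add: sum.distrib)

lemma excess_diff: "excess (\<lambda>e. f e - g e) v = excess f v - excess g v"
  unfolding excess_def by (simp add: sum_subtractf)

lemma excess_single:
  "excess (\<lambda>x. if x = e then c else 0) v = (if e \<in> E then c * (of_bool (head e = v) - of_bool (tail e = v)) else 0)"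
  unfolding excess_def using finite_E by (simp add: sum.delta' algebra_simps)

lemma excess_signed_flow:
  "walk res_tail res_head (\<lambda>l. fst l \<in> E) u ls w \<Longrightarrow>
     excess (signed_flow ls) v = of_bool (v = w) - of_bool (v = u)"
proof (induction ls arbitrary: u)
  case Nil
  then show ?case unfolding excess_def by simp
next
  case (Cons l ls)
  obtain e fwd where l: "l = (e, fwd)" by (cases l)
  have "signed_flow (l # ls) = (\<lambda>x. signed_flow ls x + (if x = e then (if fwd then 1 else -1) else 0))"
    unfolding l by auto
  then have "excess (signed_flow (l # ls)) v =
      excess (signed_flow ls) v + excess (\<lambda>x. if x = e then (if fwd then 1 else -1) else 0) v"
    by (simp add: excess_add)
  moreover have "excess (signed_flow ls) v = of_bool (v = w) - of_bool (v = res_head l)"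
    using Cons by simp
  moreover have "excess (\<lambda>x. if x = e then (if fwd then 1 else -1) else 0) v =
      of_bool (v = res_head l) - of_bool (v = u)"
    using Cons.prems l by (cases fwd) (auto simp: excess_single res_tail_def res_head_def)
  ultimately show ?case
    by simp
qed

lemma walk_forward:
  "walk tail head ok u es w \<Longrightarrow> walk res_tail res_head (\<lambda>l. ok (fst l)) u (map (\<lambda>e. (e, True)) es) w"
  by (induction es arbitrary: u) (auto simp: res_tail_def res_head_def)

lemma simple_residual_walk_distinct_arcs:
  "walk res_tail res_head ok u ls w \<Longrightarrow> distinct (u # map res_head ls) \<Longrightarrow> distinct (map fst ls)"
proof (induction ls arbitrary: u)
  case (Cons l ls)
  obtain e fwd where l: "l = (e, fwd)" by (cases l)
  have "(e, fwd') \<notin> set ls" for fwd'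
  proof
    assume in_ls: "(e, fwd') \<in> set ls"
    then have "res_head (e, fwd') \<in> res_head ` set ls" by (rule imageI)
    moreover have "res_head (e, fwd') \<in> {res_head l, u}"
      using Cons.prems(1) l by (cases fwd; cases fwd') (auto simp: res_tail_def res_head_def)
    ultimately show False
      using Cons.prems(2) by auto
  qed
  then show ?case
    using Cons l by auto
qed simp

lemma sum_excess_eq:
  assumes "finite R"
  shows "(\<Sum>v\<in>R. excess f v) = sum f (in_arcs R) - sum f (out_arcs R)"
proof -
  have ends: "(\<Sum>v\<in>R. \<Sum>e | e \<in> E \<and> g e = v. f e) = (\<Sum>e\<in>E. if g e \<in> R then f e else 0)"
    for g :: "'e \<Rightarrow> 'v"
  proof -
    have "(\<Sum>v\<in>R. \<Sum>e | e \<in> E \<and> g e = v. f e) = (\<Sum>v\<in>R. \<Sum>e\<in>E. if g e = v then f e else 0)"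
      using finite_E by (simp add: sum.inter_filter)
    also have "\<dots> = (\<Sum>e\<in>E. \<Sum>v\<in>R. if g e = v then f e else 0)"
      by (rule sum.swap)
    finally show ?thesis
      using assms by (simp add: sum.delta)
  qed
  have "(\<Sum>v\<in>R. excess f v) = (\<Sum>e\<in>E. (if head e \<in> R then f e else 0) - (if tail e \<in> R then f e else 0))"
    unfolding excess_def by (simp add: sum_subtractf ends)
  also have "\<dots> = (\<Sum>e\<in>E. (if e \<in> in_arcs R then f e else 0) - (if e \<in> out_arcs R then f e else 0))"
    by (rule sum.cong) (auto simp: in_arcs_def out_arcs_def)
  also have "\<dots> = sum f (in_arcs R) - sum f (out_arcs R)"
    using finite_E by (simp add: sum_subtractf sum.inter_filter in_arcs_def out_arcs_def)
  finally show ?thesis .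
qed

lemma flow_across_cut:
  assumes "is_flow f k" "finite R" "s \<in> R" "t \<notin> R"
  shows "sum f (out_arcs R) - sum f (in_arcs R) = int k"
proof -
  have "(\<Sum>v\<in>R. excess f v) = excess f s + (\<Sum>v\<in>R - {s}. excess f v)"
    using sum.remove[OF assms(2,3)] by simp
  also have "(\<Sum>v\<in>R - {s}. excess f v) = 0"
    using assms(1,4) unfolding is_flow_def by (intro sum.neutral) auto
  finally show ?thesis
    using assms(1) sum_excess_eq[OF assms(2)] unfolding is_flow_def by simp
qed

lemma st_path_meets_out_arcs:
  assumes "s \<in> R" "t \<notin> R" "P \<in> st_paths tail head E s t"
  shows "P \<inter> out_arcs R \<noteq> {}"
proof -
  have P: "is_st_path tail head E s t P"
    using assms(3) unfolding st_paths_def by simp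
  obtain e where "e \<in> P" "tail e \<in> R" "head e \<notin> R"
    using st_path_leaves[OF P assms(1,2)] by blast
  moreover have "e \<in> E"
    using is_st_path_subset[OF P] \<open>e \<in> P\<close> by blast
  ultimately show ?thesis
    unfolding out_arcs_def by blast
qed

lemma positive_path_exists:
  assumes "is_flow f (Suc k)"
  shows "\<exists>es. walk tail head (\<lambda>e. e \<in> E \<and> 0 < f e) s es t \<and> distinct (s # map head es)"
proof -
  define G where "G = {(tail e, head e) | e. e \<in> E \<and> 0 < f e}"
  define R where "R = {v. (s, v) \<in> G\<^sup>*}"
  have "t \<in> R"
  proof (rule ccontr)
    assume "t \<notin> R"
    have "finite R"
      unfolding R_def G_def by (rule finite_reachable) (use finite_E in simp)
    have "f e = 0" if "e \<in> out_arcs R" for e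
    proof -
      have "(s, head e) \<notin> G\<^sup>*" "(s, tail e) \<in> G\<^sup>*"
        using that unfolding out_arcs_def R_def by auto
      then have "(tail e, head e) \<notin> G"
        by (meson rtrancl.rtrancl_into_rtrancl)
      then show ?thesis
        using that assms unfolding G_def out_arcs_def is_flow_def by force
    qed
    then have "sum f (out_arcs R) = 0"
      by simp
    moreover have "0 \<le> sum f (in_arcs R)"
      using assms unfolding is_flow_def in_arcs_def by (intro sum_nonneg) auto
    ultimately show False
      using flow_across_cut[OF assms \<open>finite R\<close> _ \<open>t \<notin> R\<close>] unfolding R_def by simp
  qed
  then show ?thesis
    using rtrancl_imp_simple_walk[of s t tail head "\<lambda>e. e \<in> E \<and> 0 < f e"] unfolding R_def G_def by simp
qed

lemma flow_minus_path:
  assumes "is_flow f (Suc k)" and es: "walk tail head (\<lambda>e. e \<in> E \<and> 0 < f e) s es t" "distinct (s # map head es)"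
  shows "is_flow (\<lambda>e. f e - of_bool (e \<in> set es)) k"
proof -
  have "distinct es"
    using es(2) by (simp add: distinct_map)
  then have "signed_flow (map (\<lambda>e. (e, True)) es) = (\<lambda>e. of_bool (e \<in> set es))"
    by (simp add: fun_eq_iff signed_flow_forward)
  moreover have "walk tail head (\<lambda>e. e \<in> E) s es t"
    by (rule walk_mono[OF es(1)]) simp
  then have "walk res_tail res_head (\<lambda>l. fst l \<in> E) s (map (\<lambda>e. (e, True)) es) t"
    by (rule walk_forward)
  ultimately have path_excess: "excess (\<lambda>e. of_bool (e \<in> set es)) v = of_bool (v = t) - of_bool (v = s)" for v
    using excess_signed_flow by metis
  have "0 < f e" if "e \<in> set es" for e
    using walk_ok[OF es(1) that] by simp
  then show ?thesis
    using assms(1) s_neq_t unfolding is_flow_def by (force simp: excess_diff path_excess)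
qed

lemma flow_decomposition:
  "is_flow f k \<Longrightarrow> \<exists>ps\<in>packings tail head E s t N. length ps = k \<and> (\<forall>P\<in>set ps. \<forall>e\<in>P. 0 < f e)"
proof (induction k arbitrary: f)
  case 0
  show ?case using Nil_in_packings by fastforce
next
  case (Suc k)
  obtain es where es: "walk tail head (\<lambda>e. e \<in> E \<and> 0 < f e) s es t" "distinct (s # map head es)"
    using positive_path_exists[OF Suc.prems] by blast
  define f' where "f' e = f e - of_bool (e \<in> set es)" for e
  obtain ps where ps: "ps \<in> packings tail head E s t N" "length ps = k" "\<forall>P\<in>set ps. \<forall>e\<in>P. 0 < f' e"
    using Suc.IH[OF flow_minus_path[OF Suc.prems es]] unfolding f'_def by blast
  have "walk tail head (\<lambda>e. e \<in> E) s es t"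
    by (rule walk_mono[OF es(1)]) simp
  then have "set es \<in> st_paths tail head E s t"
    using simple_walk_is_st_path es(2) unfolding st_paths_def by simp
  moreover have "set es \<inter> Q \<inter> N = {}" if "Q \<in> set ps" for Q
  proof -
    \<comment> \<open>a private arc of the path carries flow 1, all of which the path removes\<close>
    have "f' e \<le> 0" if "e \<in> set es" "e \<in> N" for e
      using walk_ok[OF es(1) \<open>e \<in> set es\<close>] Suc.prems that unfolding f'_def is_flow_def by force
    then show ?thesis
      using ps(3) that by fastforce
  qed
  ultimately have "set es # ps \<in> packings tail head E s t N"
    using ps(1) by (simp add: Cons_in_packings_iff)
  moreover have "f' e \<le> f e" for e
    unfolding f'_def by simp
  then have "\<forall>P\<in>set (set es # ps). \<forall>e\<in>P. 0 < f e"
    using ps(3) walk_ok[OF es(1)] by (auto intro: less_le_trans)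
  ultimately show ?case
    using ps(2) by (metis length_Cons)
qed

lemma flow_value_le_card_N: "is_flow f k \<Longrightarrow> k \<le> card N"
  using flow_decomposition length_packing_le_card[OF _ finite_N order_refl] paths_meet_N by metis

lemma flow_augment:
  assumes "is_flow f k" and ls: "walk res_tail res_head (residual f) s ls t" "distinct (s # map res_head ls)"
  shows "is_flow (\<lambda>e. f e + signed_flow ls e) (Suc k)"
proof -
  have "walk res_tail res_head (\<lambda>l. fst l \<in> E) s ls t"
    by (rule walk_mono[OF ls(1)]) (simp add: residual_def)
  then have path_excess: "excess (signed_flow ls) v = of_bool (v = t) - of_bool (v = s)" for v
    by (rule excess_signed_flow)
  have signed: "signed_flow ls e =
      (if (e, True) \<in> set ls then 1 else if (e, False) \<in> set ls then -1 else 0)" for e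
    by (rule signed_flow_distinct[OF simple_residual_walk_distinct_arcs[OF ls]])
  have fwd: "f e < 1" if "(e, True) \<in> set ls" "e \<in> N" for e
    using walk_ok[OF ls(1) that(1)] that(2) unfolding residual_def by simp
  have bwd: "0 < f e" if "(e, False) \<in> set ls" for e
    using walk_ok[OF ls(1) that] unfolding residual_def by simp
  have "0 \<le> f e + signed_flow ls e \<and> (e \<in> N \<longrightarrow> f e + signed_flow ls e \<le> 1)" if "e \<in> E" for e
    using assms(1) that fwd[of e] bwd[of e] unfolding signed is_flow_def by auto
  then show ?thesis
    using assms(1) s_neq_t N_subset_E unfolding is_flow_def by (auto simp: excess_add path_excess)
qed

lemma saturated_cut:
  assumes "is_flow f k" "finite R" "s \<in> R" "t \<notin> R"
    and closed: "\<And>l. residual f l \<Longrightarrow> res_tail l \<in> R \<Longrightarrow> res_head l \<in> R"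
  shows "out_arcs R \<subseteq> N" "card (out_arcs R) = k"
proof -
  have out: "e \<in> N \<and> f e = 1" if "e \<in> out_arcs R" for e
  proof -
    have "\<not> residual f (e, True)"
      using closed[of "(e, True)"] that unfolding out_arcs_def res_tail_def res_head_def by auto
    then show ?thesis
      using that assms(1) unfolding out_arcs_def residual_def is_flow_def by auto
  qed
  have "f e = 0" if "e \<in> in_arcs R" for e
  proof -
    have "\<not> residual f (e, False)"
      using closed[of "(e, False)"] that unfolding in_arcs_def res_tail_def res_head_def by auto
    then show ?thesis
      using that assms(1) unfolding in_arcs_def residual_def is_flow_def by force
  qed
  then have "sum f (in_arcs R) = 0"
    by simp
  moreover have "sum f (out_arcs R) = int (card (out_arcs R))"
    using out by simp
  ultimately show "card (out_arcs R) = k"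
    using flow_across_cut[OF assms(1-4)] by simp
  show "out_arcs R \<subseteq> N"
    using out by blast
qed

lemma max_flow_min_cut:
  "\<exists>C\<subseteq>N. (\<exists>f. is_flow f (card C)) \<and> (\<forall>P\<in>st_paths tail head E s t. P \<inter> C \<noteq> {})"
proof -
  define flow_values where "flow_values = {k. \<exists>f. is_flow f k}"
  have "finite flow_values"
    unfolding flow_values_def using flow_value_le_card_N finite_nat_set_iff_bounded_le by blast
  moreover have "0 \<in> flow_values"
    unfolding flow_values_def is_flow_def excess_def by auto
  ultimately obtain f where f: "is_flow f (Max flow_values)"
    using Max_in unfolding flow_values_def by blast
  define G where "G = {(res_tail l, res_head l) | l. residual f l}"
  define R where "R = {v. (s, v) \<in> G\<^sup>*}"
  have closed: "res_head l \<in> R" if "residual f l" "res_tail l \<in> R" for l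
    using that unfolding R_def G_def by (blast intro: rtrancl_into_rtrancl)
  have "finite (res_head ` Collect (residual f))"
    by (rule finite_subset[of _ "tail ` E \<union> head ` E"])
      (use finite_E in \<open>auto simp: residual_def res_head_def\<close>)
  then have "finite R"
    unfolding R_def G_def by (rule finite_reachable)
  have "t \<notin> R"
  proof
    assume "t \<in> R"
    then obtain ls where "walk res_tail res_head (residual f) s ls t" "distinct (s # map res_head ls)"
      using rtrancl_imp_simple_walk[of s t res_tail res_head "residual f"] unfolding R_def G_def by auto
    then have "Suc (Max flow_values) \<in> flow_values"
      using flow_augment[OF f] unfolding flow_values_def by blast
    then have "Suc (Max flow_values) \<le> Max flow_values"
      using Max_ge[OF \<open>finite flow_values\<close>] by blast
    then show False
      by simp
  qed
  have "s \<in> R"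
    unfolding R_def by simp
  note cut = saturated_cut[OF f \<open>finite R\<close> \<open>s \<in> R\<close> \<open>t \<notin> R\<close> closed]
  then show ?thesis
    using cut f st_path_meets_out_arcs[OF \<open>s \<in> R\<close> \<open>t \<notin> R\<close>] by (intro exI[of _ "out_arcs R"]) auto
qed

lemma cut_with_packing:
  "\<exists>C\<subseteq>N. (\<forall>P\<in>st_paths tail head E s t. P \<inter> C \<noteq> {}) \<and> card C \<in> length ` packings tail head E s t N"
  using max_flow_min_cut flow_decomposition by (metis image_eqI)

end

lemma sigmaN_eq_card_cut:
  assumes "finite E" "N \<subseteq> E" "\<forall>P\<in>st_paths tail head E s t. P \<inter> N \<noteq> {}"
  shows "\<exists>C\<subseteq>N. (\<forall>P\<in>st_paths tail head E s t. P \<inter> C \<noteq> {}) \<and> sigmaN tail head E N s t = card C"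
proof -
  have "s \<noteq> t"
  proof
    assume "s = t"
    then have "{} \<in> st_paths tail head E s t"
      using is_st_path_refl unfolding st_paths_def by simp
    then show False
      using assms(3) by blast
  qed
  then interpret st_network E N s t tail head
    using assms by unfold_locales
  obtain C where C: "C \<subseteq> N" "\<forall>P\<in>st_paths tail head E s t. P \<inter> C \<noteq> {}"
      "card C \<in> length ` packings tail head E s t N"
    using cut_with_packing by blast
  have "finite C"
    using C(1) finite_N finite_subset by blast
  have "k \<le> card C" if "k \<in> length ` packings tail head E s t N" for k
    using that length_packing_le_card[OF _ \<open>finite C\<close> C(1,2)] by blast
  then have "sigmaN tail head E N s t = card C"
    unfolding sigmaN_eq_Max_packings
    by (rule Max_eqI[OF finite_packing_lengths[OF \<open>finite C\<close> C(1,2)] _ C(3)])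
  then show ?thesis
    using C by blast
qed

lemma one_le_Max_packings:
  assumes "finite (length ` packings tail head A s t X)" "P \<in> st_paths tail head A s t"
  shows "1 \<le> Max (length ` packings tail head A s t X)"
proof -
  have "[P] \<in> packings tail head A s t X"
    using assms(2) unfolding packings_def by simp
  then have "length [P] \<in> length ` packings tail head A s t X"
    by (rule imageI)
  then show ?thesis
    using Max_ge[OF assms(1)] by (metis One_nat_def length_Cons list.size(3))
qed

lemma one_le_gamma_tilde_path:
  assumes "finite E" "N \<subseteq> E" "\<forall>P\<in>st_paths tail head E s t. P \<inter> N \<noteq> {}"
    and "P \<in> st_paths tail head E s t"
  shows "1 \<le> gamma_tilde tail head E N s t (N \<inter> P)"
proof -
  have "finite N"
    using assms(1,2) finite_subset by blast
  define A where "A = (N \<inter> P) \<union> (E - N)"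
  have P: "is_st_path tail head E s t P"
    using assms(4) unfolding st_paths_def by simp
  then have "P \<subseteq> A"
    using is_st_path_subset[OF P] unfolding A_def by blast
  then have "P \<in> st_paths tail head A s t"
    using is_st_path_mono[OF P] unfolding st_paths_def by simp
  moreover have "A \<subseteq> E"
    using assms(2) unfolding A_def by blast
  then have "\<forall>Q\<in>st_paths tail head A s t. Q \<inter> N \<noteq> {}"
    using assms(3) st_paths_mono[of A E tail head s t] by blast
  ultimately have "1 \<le> gamma tail head E N s t (N \<inter> P)"
    unfolding gamma_eq_Max_packings A_def[symmetric]
    by (intro one_le_Max_packings finite_packing_lengths[OF \<open>finite N\<close>]) auto
  moreover have "1 \<le> sigmaN tail head E N s t"
    unfolding sigmaN_eq_Max_packings
    by (intro one_le_Max_packings finite_packing_lengths[OF \<open>finite N\<close>]) (use assms(3,4) in auto)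
  ultimately show ?thesis
    unfolding gamma_tilde_def by simp
qed

lemma length_packing_le_sum:
  assumes "ps \<in> packings tail head A s t UNIV" "finite N" "\<forall>e\<in>N. 0 \<le> x e"
    and "\<forall>P\<in>set ps. 1 \<le> sum x (N \<inter> P)"
  shows "real (length ps) \<le> sum x (N \<inter> A)"
proof -
  have "1 \<le> sum x (N \<inter> ps ! i)" if "i < length ps" for i
    using assms(4) nth_mem[OF that] by blast
  then have "real (length ps) \<le> (\<Sum>i<length ps. sum x (N \<inter> ps ! i))"
    using sum_mono[of "{..<length ps}" "\<lambda>_. 1::real"] by simp
  also have "\<dots> = sum x (\<Union>i<length ps. N \<inter> ps ! i)"
    using assms(1,2) unfolding packings_def by (intro sum.UNION_disjoint[symmetric]) auto
  also have "\<dots> \<le> sum x (N \<inter> A)"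
  proof (rule sum_mono2)
    have "P \<subseteq> A" if "P \<in> set ps" for P
      using assms(1) that unfolding packings_def st_paths_def by (auto dest: is_st_path_subset)
    then show "(\<Union>i<length ps. N \<inter> ps ! i) \<subseteq> N \<inter> A"
      by force
  qed (use assms(2,3) in auto)
  finally show ?thesis .
qed

lemma gamma_attained:
  assumes "finite E" "N \<subseteq> E" "\<forall>P\<in>st_paths tail head E s t. P \<inter> N \<noteq> {}" "S \<subseteq> N"
  shows "\<exists>ps\<in>packings tail head (S \<union> (E - N)) s t UNIV. gamma tail head E N s t S = length ps"
proof -
  have "finite N"
    using assms(1,2) finite_subset by blast
  have "st_paths tail head (S \<union> (E - N)) s t \<subseteq> st_paths tail head E s t"
    using assms(2,4) by (intro st_paths_mono) blast
  then have "finite (length ` packings tail head (S \<union> (E - N)) s t UNIV)"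
    using assms(3) by (intro finite_packing_lengths[OF \<open>finite N\<close>]) auto
  moreover have "length ` packings tail head (S \<union> (E - N)) s t UNIV \<noteq> {}"
    using Nil_in_packings by (metis empty_iff image_eqI)
  ultimately have "gamma tail head E N s t S \<in> length ` packings tail head (S \<union> (E - N)) s t UNIV"
    unfolding gamma_eq_Max_packings by (rule Max_in)
  then show ?thesis
    by blast
qed

lemma gamma_le_sum_if_paths_covered:
  assumes "finite E" "N \<subseteq> E" "\<forall>P\<in>st_paths tail head E s t. P \<inter> N \<noteq> {}"
    and "S \<subseteq> N" "\<forall>e\<in>N. 0 \<le> x e" "\<forall>P\<in>st_paths tail head E s t. 1 \<le> sum x (N \<inter> P)"
  shows "real (gamma tail head E N s t S) \<le> sum x S"
proof -
  obtain ps where ps: "ps \<in> packings tail head (S \<union> (E - N)) s t UNIV"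
      "gamma tail head E N s t S = length ps"
    using gamma_attained[OF assms(1-4)] by blast
  have "set ps \<subseteq> st_paths tail head (S \<union> (E - N)) s t"
    using ps(1) unfolding packings_def by simp
  also have "\<dots> \<subseteq> st_paths tail head E s t"
    using assms(2,4) by (intro st_paths_mono) blast
  finally have "set ps \<subseteq> st_paths tail head E s t" .
  then have "real (length ps) \<le> sum x (N \<inter> (S \<union> (E - N)))"
    using assms(1,2,5,6) finite_subset by (intro length_packing_le_sum[OF ps(1)]) auto
  also have "N \<inter> (S \<union> (E - N)) = S"
    using assms(4) by blast
  finally show ?thesis
    using ps(2) by simp
qed

lemma core_eq_path_constraints:
  assumes "finite E" "N \<subseteq> E" "\<forall>P\<in>st_paths tail head E s t. P \<inter> N \<noteq> {}"
  shows "core tail head E N s t =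
           {x \<in> chi tail head E N s t. \<forall>P\<in>st_paths tail head E s t. sum x (N \<inter> P) \<ge> 1}"
proof (intro set_eqI iffI)
  fix x assume x: "x \<in> core tail head E N s t"
  have "1 \<le> sum x (N \<inter> P)" if "P \<in> st_paths tail head E s t" for P
  proof -
    have "real (gamma_tilde tail head E N s t (N \<inter> P)) \<le> sum x (N \<inter> P)"
      using x unfolding core_def by blast
    then show ?thesis
      using one_le_gamma_tilde_path[OF assms that] by linarith
  qed
  then show "x \<in> {x \<in> chi tail head E N s t. \<forall>P\<in>st_paths tail head E s t. sum x (N \<inter> P) \<ge> 1}"
    using x unfolding core_def by blast
next
  fix x assume x: "x \<in> {x \<in> chi tail head E N s t. \<forall>P\<in>st_paths tail head E s t. sum x (N \<inter> P) \<ge> 1}"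
  have "real (gamma_tilde tail head E N s t S) \<le> sum x S" if "S \<subseteq> N" for S
    using x gamma_le_sum_if_paths_covered[OF assms that, of x]
    unfolding chi_def gamma_tilde_def by auto
  then show "x \<in> core tail head E N s t"
    using x unfolding core_def by blast
qed

lemma cut_indicator_satisfies_path_constraints:
  assumes "finite N" "C \<subseteq> N" "\<forall>P\<in>st_paths tail head E s t. P \<inter> C \<noteq> {}"
    and "sigmaN tail head E N s t = card C"
  shows "restrict (\<lambda>e. of_bool (e \<in> C)) N \<in>
           {x \<in> chi tail head E N s t. \<forall>P\<in>st_paths tail head E s t. sum x (N \<inter> P) \<ge> 1}"
proof -
  define x :: "_ \<Rightarrow> real" where "x = restrict (\<lambda>e. of_bool (e \<in> C)) N"
  have sum_x: "sum x T = real (card (T \<inter> C))" if "T \<subseteq> N" for T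
  proof -
    have "finite T"
      using assms(1) that finite_subset by blast
    then have "sum x T = (\<Sum>e\<in>T. of_bool (e \<in> C))"
      using that unfolding x_def by (intro sum.cong) auto
    also have "\<dots> = real (card (T \<inter> C))"
      using \<open>finite T\<close> by (simp add: sum.inter_filter[symmetric] Int_def)
    finally show ?thesis .
  qed
  have "sum x N = real (sigmaN tail head E N s t)"
    using sum_x[of N] assms(2,4) by (simp add: Int_absorb1)
  moreover have "1 \<le> sum x (N \<inter> P)" if "P \<in> st_paths tail head E s t" for P
  proof -
    have "N \<inter> P \<inter> C \<noteq> {}"
      using assms(2,3) that by blast
    then show ?thesis
      using sum_x[of "N \<inter> P"] assms(1) by (simp add: Suc_le_eq card_gt_0_iff)
  qed
  moreover have "x \<in> extensional N" "\<forall>e\<in>N. 0 \<le> x e"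
    unfolding x_def by simp_all
  ultimately show ?thesis
    unfolding chi_def x_def[symmetric] by blast
qed

theorem lemma5:
  fixes V :: "'v set" and E N :: "'e set" and s t :: 'v
    and tail head :: "'e \<Rightarrow> 'v"
  assumes "finite V" and "finite E"
    and "s \<in> V" and "t \<in> V"
    and "\<forall>e\<in>E. tail e \<in> V \<and> head e \<in> V"
    and "N \<subseteq> E"
    and "\<forall>P\<in>st_paths tail head E s t. P \<inter> N \<noteq> {}"
    and "\<forall>e\<in>E. \<exists>P\<in>st_paths tail head E s t. e \<in> P"
  shows "core tail head E N s t =
           {x \<in> chi tail head E N s t. \<forall>P\<in>st_paths tail head E s t. sum x (N \<inter> P) \<ge> 1}
         \<and> core tail head E N s t \<noteq> {}"
proof -
  have core_eq: "core tail head E N s t =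
      {x \<in> chi tail head E N s t. \<forall>P\<in>st_paths tail head E s t. sum x (N \<inter> P) \<ge> 1}"
    by (rule core_eq_path_constraints[OF assms(2,6,7)])
  obtain C where C: "C \<subseteq> N" "\<forall>P\<in>st_paths tail head E s t. P \<inter> C \<noteq> {}"
      "sigmaN tail head E N s t = card C"
    using sigmaN_eq_card_cut[OF assms(2,6,7)] by blast
  have "finite N"
    using assms(2,6) finite_subset by blast
  then have "restrict (\<lambda>e. of_bool (e \<in> C)) N \<in> core tail head E N s t"
    unfolding core_eq by (rule cut_indicator_satisfies_path_constraints[OF _ C])
  then have "core tail head E N s t \<noteq> {}"
    by blast
  with core_eq show ?thesis ..
qed

end
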